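(* Let $F$ be a field with separable closure $F_s$ and absolute Galois group $\Gamma=\mathrm{Gal}(F_s/F)$. Let $W(D_4)\subset\mathrm{O}_4(\mathbb R)$ be the group of matrices $D\cdot P(\pi)$ with $D=\mathrm{diag}(\varepsilon_1,\dots,\varepsilon_4)$, $\varepsilon_i=\pm1$, $\prod\varepsilon_i=1$, $P(\pi)$ the permutation matrix of $\pi\in\mathfrak S_4$, and let $\tilde\mu$, $\tilde\rho$ be the trialitarian automorphisms given by conjugation by $$\mu=\tfrac12\begin{pmatrix}1&1&1&-1\\1&1&-1&1\\1&-1&1&1\\1&-1&-1&-1\end{pmatrix},\qquad \rho=\tfrac12\begin{pmatrix}-1&1&1&1\\-1&-1&1&-1\\-1&-1&-1&1\\-1&1&-1&-1\end{pmatrix}.$$ Let $\xi\in H^1(F,W(D_4))$ be a class fixed by $\tilde\mu_*$. Then there exists $\alpha\in\{\tilde\mu,\tilde\rho\}$ such that $\xi$ lies in the image of the map $H^1(F,\mathrm{Fix}(\alpha))\to H^1(F,W(D_4))$ induced by the inclusion $\mathrm{Fix}(\alpha)\subset W(D_4)$.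
   Context: For a finite group $G$ (with trivial $\Gamma$-action), $H^1(F,G)$ is the set of continuous homomorphisms $\Gamma\to G$ modulo conjugation by elements of $G$. An automorphism $\alpha$ of $W(D_4)$ acts on $H^1(F,W(D_4))$ by $\alpha_*[\varphi]=[\alpha\circ\varphi]$; this action depends only on the class of $\alpha$ modulo inner automorphisms. $\mathrm{Fix}(\alpha)=\{x\in W(D_4)\mid\alpha(x)=x\}$. A trialitarian automorphism is a non-inner automorphism of order $3$. *)

theory Defs
  imports "HOL-Analysis.Analysis" "HOL-Algebra.Group"
begin

definition diag_mat :: "(4 \<Rightarrow> real) \<Rightarrow> real^4^4" where
  "diag_mat e = (\<chi> i j. if i = j then e i else 0)"

definition perm_mat :: "(4 \<Rightarrow> 4) \<Rightarrow> real^4^4" where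
  "perm_mat p = (\<chi> i j. if i = p j then 1 else 0)"

definition WD4 :: "(real^4^4) set" where
  "WD4 = {diag_mat e ** perm_mat p | e p.
            (\<forall>i. e i = 1 \<or> e i = -1) \<and> (\<Prod>i\<in>UNIV. e i) = 1 \<and> p permutes UNIV}"

definition WD4_group :: "(real^4^4) monoid" where
  "WD4_group = \<lparr>carrier = WD4, monoid.mult = (\<lambda>A B. A ** B), one = mat 1\<rparr>"

text \<open>Rows are listed top to bottom; the index type 4 is enumerated 1,2,3,0 by vector.\<close>
definition mu_mat :: "real^4^4" where
  "mu_mat = (1/2) *\<^sub>R (vector [vector [1,1,1,-1], vector [1,1,-1,1],
                               vector [1,-1,1,1], vector [1,-1,-1,-1]] :: real^4^4)"

definition rho_mat :: "real^4^4" where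
  "rho_mat = (1/2) *\<^sub>R (vector [vector [-1,1,1,1], vector [-1,-1,1,-1],
                                vector [-1,-1,-1,1], vector [-1,1,-1,-1]] :: real^4^4)"

definition conj_by :: "real^4^4 \<Rightarrow> real^4^4 \<Rightarrow> real^4^4" where
  "conj_by M x = M ** x ** matrix_inv M"

definition mu_aut :: "real^4^4 \<Rightarrow> real^4^4" where "mu_aut = conj_by mu_mat"
definition rho_aut :: "real^4^4 \<Rightarrow> real^4^4" where "rho_aut = conj_by rho_mat"

definition Fix :: "(real^4^4 \<Rightarrow> real^4^4) \<Rightarrow> (real^4^4) set" where
  "Fix a = {x \<in> WD4. a x = x}"

definition topological_group :: "('a, 'm) monoid_scheme \<Rightarrow> 'a topology \<Rightarrow> bool" where
  "topological_group G T \<longleftrightarrow> group G \<and> topspace T = carrier G \<and>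
     continuous_map (prod_topology T T) T (\<lambda>(x, y). x \<otimes>\<^bsub>G\<^esub> y) \<and>
     continuous_map T T (\<lambda>x. inv\<^bsub>G\<^esub> x)"

definition cont_hom :: "('a, 'm) monoid_scheme \<Rightarrow> 'a topology \<Rightarrow> ('b, 'n) monoid_scheme \<Rightarrow> ('a \<Rightarrow> 'b) set" where
  "cont_hom G T K = {\<phi> \<in> hom G K. continuous_map T (discrete_topology (carrier K)) \<phi>}"

definition conj_equiv :: "('a, 'm) monoid_scheme \<Rightarrow> 'a topology \<Rightarrow> ('b, 'n) monoid_scheme \<Rightarrow> (('a \<Rightarrow> 'b) \<times> ('a \<Rightarrow> 'b)) set" where
  "conj_equiv G T K = {(\<phi>, \<psi>). \<phi> \<in> cont_hom G T K \<and> \<psi> \<in> cont_hom G T K \<and>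
      (\<exists>g \<in> carrier K. \<forall>x \<in> carrier G. \<psi> x = g \<otimes>\<^bsub>K\<^esub> \<phi> x \<otimes>\<^bsub>K\<^esub> inv\<^bsub>K\<^esub> g)}"

definition H1 :: "('a, 'm) monoid_scheme \<Rightarrow> 'a topology \<Rightarrow> ('b, 'n) monoid_scheme \<Rightarrow> ('a \<Rightarrow> 'b) set set" where
  "H1 G T K = cont_hom G T K // conj_equiv G T K"

definition H1_class :: "('a, 'm) monoid_scheme \<Rightarrow> 'a topology \<Rightarrow> ('b, 'n) monoid_scheme \<Rightarrow> ('a \<Rightarrow> 'b) \<Rightarrow> ('a \<Rightarrow> 'b) set" where
  "H1_class G T K \<phi> = conj_equiv G T K `` {\<phi>}"

definition H1_act :: "('a, 'm) monoid_scheme \<Rightarrow> 'a topology \<Rightarrow> ('b, 'n) monoid_scheme \<Rightarrow> ('b \<Rightarrow> 'b) \<Rightarrow> ('a \<Rightarrow> 'b) set \<Rightarrow> ('a \<Rightarrow> 'b) set" where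
  "H1_act G T K a \<xi> = H1_class G T K (a \<circ> (SOME \<phi>. \<phi> \<in> \<xi>))"

definition H1_incl_image :: "('a, 'm) monoid_scheme \<Rightarrow> 'a topology \<Rightarrow> ('b, 'n) monoid_scheme \<Rightarrow> 'b set \<Rightarrow> ('a \<Rightarrow> 'b) set set" where
  "H1_incl_image G T K S = {H1_class G T K \<psi> | \<psi>. \<psi> \<in> cont_hom G T (K\<lparr>carrier := S\<rparr>)}"

end

theory Submission
  imports Defs
begin

text \<open>
  If \<open>\<mu>\<^sub>*\<xi> = \<xi>\<close> and \<open>\<phi>\<close> represents \<open>\<xi>\<close>, then \<open>\<phi> = Int(g) \<circ> \<mu> \<circ> \<phi>\<close> for some \<open>g \<in> W(D\<^sub>4)\<close>,
  so \<open>\<phi>\<close> takes values in the centraliser of the orthogonal matrix \<open>g\<mu>\<close>. For each of the 192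
  elements \<open>g\<close> there are \<open>h \<in> W(D\<^sub>4)\<close> and \<open>A \<in> {\<mu>, \<rho>}\<close> such that \<open>h\<^sup>-\<^sup>1 A h\<close> is a polynomial in
  \<open>g\<mu>\<close>; everything commuting with \<open>g\<mu>\<close> then commutes with \<open>h\<^sup>-\<^sup>1 A h\<close>, so the cohomologous
  cocycle \<open>h \<phi> h\<^sup>-\<^sup>1\<close> takes values in the centraliser of \<open>A\<close>, which is \<open>Fix(\<alpha>)\<close> for \<open>\<alpha>\<close>
  conjugation by \<open>A\<close>. The 192 pairs \<open>(h, A)\<close> with their polynomials are checked by
  evaluation on integer matrices.
\<close>

section \<open>Nonabelian $H^1$ with trivial action\<close>

lemma continuous_map_discrete_topology_comp:
  assumes "continuous_map X (discrete_topology U) f"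
    and "\<And>x. x \<in> topspace X \<Longrightarrow> c (f x) \<in> V"
  shows "continuous_map X (discrete_topology V) (\<lambda>x. c (f x))"
proof -
  have "continuous_map X (subtopology (discrete_topology U) {y. c y \<in> V}) f"
    using assms by (intro continuous_map_into_subtopology) auto
  then have "continuous_map X (discrete_topology (U \<inter> {y. c y \<in> V})) f"
    by simp
  moreover have "continuous_map (discrete_topology (U \<inter> {y. c y \<in> V})) (discrete_topology V) c"
    by auto
  ultimately show ?thesis
    using continuous_map_compose unfolding o_def by blast
qed

context group
begin

lemma cont_hom_in_carrier: "\<phi> \<in> cont_hom \<Gamma> T G \<Longrightarrow> x \<in> carrier \<Gamma> \<Longrightarrow> \<phi> x \<in> carrier G"
  by (auto simp: cont_hom_def dest: hom_in_carrier)

lemma conj_equiv_equiv: "equiv (cont_hom \<Gamma> T G) (conj_equiv \<Gamma> T G)"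
proof (rule equivI)
  show "refl_on (cont_hom \<Gamma> T G) (conj_equiv \<Gamma> T G)"
    by (auto simp: refl_on_def conj_equiv_def cont_hom_in_carrier intro!: bexI[of _ \<one>])
  show "sym (conj_equiv \<Gamma> T G)"
  proof (rule symI)
    fix \<phi> \<psi> assume "(\<phi>, \<psi>) \<in> conj_equiv \<Gamma> T G"
    then obtain g where g: "g \<in> carrier G" and \<phi>: "\<phi> \<in> cont_hom \<Gamma> T G" and \<psi>: "\<psi> \<in> cont_hom \<Gamma> T G"
      and e: "\<forall>x \<in> carrier \<Gamma>. \<psi> x = g \<otimes> \<phi> x \<otimes> inv g" by (auto simp: conj_equiv_def)
    have "\<phi> x = inv g \<otimes> \<psi> x \<otimes> inv (inv g)" if "x \<in> carrier \<Gamma>" for x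
      using e that g cont_hom_in_carrier[OF \<phi> that] by (simp add: m_assoc[symmetric]) (simp add: m_assoc)
    then show "(\<psi>, \<phi>) \<in> conj_equiv \<Gamma> T G"
      using g \<phi> \<psi> unfolding conj_equiv_def by (auto intro!: bexI[of _ "inv g"])
  qed
  show "trans (conj_equiv \<Gamma> T G)"
  proof (rule transI)
    fix \<phi> \<psi> \<theta> assume "(\<phi>, \<psi>) \<in> conj_equiv \<Gamma> T G" "(\<psi>, \<theta>) \<in> conj_equiv \<Gamma> T G"
    then obtain g h where g: "g \<in> carrier G" and h: "h \<in> carrier G" and \<phi>: "\<phi> \<in> cont_hom \<Gamma> T G"
      and \<theta>: "\<theta> \<in> cont_hom \<Gamma> T G"
      and e1: "\<forall>x \<in> carrier \<Gamma>. \<psi> x = g \<otimes> \<phi> x \<otimes> inv g"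
      and e2: "\<forall>x \<in> carrier \<Gamma>. \<theta> x = h \<otimes> \<psi> x \<otimes> inv h" by (auto simp: conj_equiv_def)
    have "\<theta> x = (h \<otimes> g) \<otimes> \<phi> x \<otimes> inv (h \<otimes> g)" if "x \<in> carrier \<Gamma>" for x
      using e1 e2 that g h cont_hom_in_carrier[OF \<phi> that] by (simp add: inv_mult_group m_assoc)
    then show "(\<phi>, \<theta>) \<in> conj_equiv \<Gamma> T G"
      using g h \<phi> \<theta> by (auto simp: conj_equiv_def)
  qed
qed (auto simp: conj_equiv_def)

lemma H1_act_fixed_cocycle:
  assumes "\<xi> \<in> H1 \<Gamma> T G" and "H1_act \<Gamma> T G a \<xi> = \<xi>"
  obtains \<phi> g where "\<phi> \<in> cont_hom \<Gamma> T G" "\<xi> = H1_class \<Gamma> T G \<phi>" "g \<in> carrier G"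
    "\<And>x. x \<in> carrier \<Gamma> \<Longrightarrow> \<phi> x = g \<otimes> a (\<phi> x) \<otimes> inv g"
proof -
  let ?r = "conj_equiv \<Gamma> T G"
  obtain \<phi>0 where \<xi>: "\<xi> = ?r `` {\<phi>0}" and \<phi>0: "\<phi>0 \<in> cont_hom \<Gamma> T G"
    using assms(1) unfolding H1_def by (rule quotientE)
  then have "\<phi>0 \<in> \<xi>"
    using equiv_class_self[OF conj_equiv_equiv] by simp
  then have "(SOME \<phi>. \<phi> \<in> \<xi>) \<in> \<xi>"
    by (rule someI[where P = "\<lambda>\<phi>. \<phi> \<in> \<xi>"])
  then obtain \<phi> where \<phi>: "\<phi> = (SOME \<phi>. \<phi> \<in> \<xi>)" and \<phi>\<xi>: "\<phi> \<in> \<xi>" and r: "(\<phi>0, \<phi>) \<in> ?r"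
    unfolding \<xi> by blast
  have \<phi>C: "\<phi> \<in> cont_hom \<Gamma> T G"
    using r by (simp add: conj_equiv_def)
  have \<xi>\<phi>: "\<xi> = H1_class \<Gamma> T G \<phi>"
    unfolding H1_class_def \<xi> using conj_equiv_equiv r by (rule equiv_class_eq)
  have "H1_class \<Gamma> T G (a \<circ> \<phi>) = \<xi>"
    using assms(2) unfolding H1_act_def \<phi>[symmetric] .
  then have "(a \<circ> \<phi>, \<phi>) \<in> ?r"
    using \<phi>\<xi> unfolding H1_class_def by blast
  then obtain g where "g \<in> carrier G" "\<And>x. x \<in> carrier \<Gamma> \<Longrightarrow> \<phi> x = g \<otimes> a (\<phi> x) \<otimes> inv g"
    unfolding conj_equiv_def by auto
  with \<phi>C \<xi>\<phi> show ?thesis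
    using that by blast
qed

lemma cont_hom_conj:
  assumes "topspace T \<subseteq> carrier \<Gamma>" and "\<phi> \<in> cont_hom \<Gamma> T G" and "h \<in> carrier G"
    and "\<And>x. x \<in> carrier \<Gamma> \<Longrightarrow> h \<otimes> \<phi> x \<otimes> inv h \<in> S"
  shows "(\<lambda>x. h \<otimes> \<phi> x \<otimes> inv h) \<in> cont_hom \<Gamma> T (G\<lparr>carrier := S\<rparr>)"
proof -
  have "h \<otimes> \<phi> (x \<otimes>\<^bsub>\<Gamma>\<^esub> y) \<otimes> inv h = (h \<otimes> \<phi> x \<otimes> inv h) \<otimes> (h \<otimes> \<phi> y \<otimes> inv h)"
    if "x \<in> carrier \<Gamma>" "y \<in> carrier \<Gamma>" for x y
  proof -
    have "\<phi> (x \<otimes>\<^bsub>\<Gamma>\<^esub> y) = \<phi> x \<otimes> \<phi> y"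
      using assms(2) that by (simp add: cont_hom_def hom_mult)
    then show ?thesis
      using assms(3) cont_hom_in_carrier[OF assms(2)] that by (simp add: m_assoc inv_solve_left)
  qed
  moreover have "continuous_map T (discrete_topology (carrier G)) \<phi>"
    using assms(2) by (simp add: cont_hom_def)
  then have "continuous_map T (discrete_topology S) (\<lambda>x. h \<otimes> \<phi> x \<otimes> inv h)"
    by (rule continuous_map_discrete_topology_comp[where c = "\<lambda>y. h \<otimes> y \<otimes> inv h"])
      (use assms(1,4) in auto)
  ultimately show ?thesis
    using assms(4) by (auto simp: cont_hom_def intro: homI)
qed

lemma H1_class_conj:
  assumes "topspace T \<subseteq> carrier \<Gamma>" and "\<phi> \<in> cont_hom \<Gamma> T G" and "h \<in> carrier G"
  shows "H1_class \<Gamma> T G (\<lambda>x. h \<otimes> \<phi> x \<otimes> inv h) = H1_class \<Gamma> T G \<phi>"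
proof -
  have "(\<lambda>x. h \<otimes> \<phi> x \<otimes> inv h) \<in> cont_hom \<Gamma> T G"
    using cont_hom_conj[OF assms, of "carrier G"] assms(2,3) by (simp add: cont_hom_in_carrier)
  then have "(\<phi>, \<lambda>x. h \<otimes> \<phi> x \<otimes> inv h) \<in> conj_equiv \<Gamma> T G"
    using assms(2,3) by (auto simp: conj_equiv_def)
  then show ?thesis
    using conj_equiv_equiv unfolding H1_class_def by (metis equiv_class_eq)
qed

lemma H1_fixed_class_in_incl_image:
  assumes "topspace T \<subseteq> carrier \<Gamma>" and "\<xi> \<in> H1 \<Gamma> T G" and "H1_act \<Gamma> T G a \<xi> = \<xi>"
    and "\<And>g. g \<in> carrier G \<Longrightarrow> \<exists>h \<in> carrier G. \<exists>i \<in> I.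
           (\<lambda>y. h \<otimes> y \<otimes> inv h) ` {y \<in> carrier G. g \<otimes> a y \<otimes> inv g = y} \<subseteq> S i"
  shows "\<exists>i \<in> I. \<xi> \<in> H1_incl_image \<Gamma> T G (S i)"
proof -
  obtain \<phi> g where \<phi>: "\<phi> \<in> cont_hom \<Gamma> T G" and \<xi>: "\<xi> = H1_class \<Gamma> T G \<phi>" and g: "g \<in> carrier G"
    and twisted: "\<And>x. x \<in> carrier \<Gamma> \<Longrightarrow> \<phi> x = g \<otimes> a (\<phi> x) \<otimes> inv g"
    using H1_act_fixed_cocycle[OF assms(2,3)] by blast
  obtain h i where h: "h \<in> carrier G" and "i \<in> I"
    and hS: "(\<lambda>y. h \<otimes> y \<otimes> inv h) ` {y \<in> carrier G. g \<otimes> a y \<otimes> inv g = y} \<subseteq> S i"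
    using assms(4)[OF g] by blast
  have "h \<otimes> \<phi> x \<otimes> inv h \<in> S i" if "x \<in> carrier \<Gamma>" for x
  proof -
    have "\<phi> x \<in> {y \<in> carrier G. g \<otimes> a y \<otimes> inv g = y}"
      using twisted[OF that] cont_hom_in_carrier[OF \<phi> that] by simp
    then show ?thesis
      using hS by blast
  qed
  then have "(\<lambda>x. h \<otimes> \<phi> x \<otimes> inv h) \<in> cont_hom \<Gamma> T (G\<lparr>carrier := S i\<rparr>)"
    using cont_hom_conj[OF assms(1) \<phi> h] by blast
  moreover have "\<xi> = H1_class \<Gamma> T G (\<lambda>x. h \<otimes> \<phi> x \<otimes> inv h)"
    using H1_class_conj[OF assms(1) \<phi> h] \<xi> by simp
  ultimately show ?thesis
    using \<open>i \<in> I\<close> unfolding H1_incl_image_def by blast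
qed

end

lemma matrix_inv_orthogonal:
  fixes M :: "real^'n^'n"
  assumes "orthogonal_matrix M"
  shows "matrix_inv M = transpose M"
proof -
  have "M ** matrix_inv M = mat 1"
    using assms someI_ex[of "\<lambda>A. M ** A = mat 1 \<and> A ** M = mat 1"]
    unfolding matrix_inv_def orthogonal_matrix_def by blast
  then have "transpose M ** (M ** matrix_inv M) = transpose M"
    by simp
  then show ?thesis
    using assms by (simp add: matrix_mul_assoc orthogonal_matrix)
qed

lemma conj_by_orthogonal:
  "orthogonal_matrix M \<Longrightarrow> conj_by M x = M ** x ** transpose M"
  by (simp add: conj_by_def matrix_inv_orthogonal)

lemma conj_by_orthogonal_fixed_iff:
  assumes "orthogonal_matrix M"
  shows "conj_by M x = x \<longleftrightarrow> M ** x = x ** M"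
proof -
  have l: "transpose M ** M = mat 1" and r: "M ** transpose M = mat 1"
    using assms by (auto simp: orthogonal_matrix_def)
  show ?thesis
  proof
    assume "conj_by M x = x"
    then have "M ** x ** transpose M ** M = x ** M"
      by (simp add: conj_by_orthogonal[OF assms])
    then show "M ** x = x ** M"
      by (simp add: l flip: matrix_mul_assoc)
  next
    assume "M ** x = x ** M"
    then show "conj_by M x = x"
      by (simp add: conj_by_orthogonal[OF assms] r flip: matrix_mul_assoc)
  qed
qed

lemma matrix_add_rdistrib: "(B + C) ** A = B ** A + C ** A"
  by (vector matrix_matrix_mult_def sum.distrib[symmetric] field_simps)

primrec matrix_poly :: "real list \<Rightarrow> real^'n^'n \<Rightarrow> real^'n^'n" where
  "matrix_poly [] N = 0"
| "matrix_poly (c # cs) N = c *\<^sub>R mat 1 + N ** matrix_poly cs N"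

lemma matrix_poly_commute:
  assumes "z ** N = N ** z"
  shows "z ** matrix_poly cs N = matrix_poly cs N ** z"
proof (induction cs)
  case (Cons c cs)
  have "z ** (N ** matrix_poly cs N) = N ** matrix_poly cs N ** z"
    by (metis Cons.IH assms matrix_mul_assoc)
  then show ?case
    by (simp add: matrix_add_ldistrib matrix_add_rdistrib matrix_scalar_ac scalar_matrix_assoc[symmetric])
qed simp

lemma commute_conj_orthogonal:
  fixes h A y :: "real^'n^'n"
  assumes "orthogonal_matrix h" and "(transpose h ** A ** h) ** y = y ** (transpose h ** A ** h)"
  shows "A ** (h ** y ** transpose h) = (h ** y ** transpose h) ** A"
proof -
  have hh: "h ** transpose h = mat 1"
    using assms(1) by (simp add: orthogonal_matrix_def)
  have "A ** (h ** y ** transpose h) = h ** ((transpose h ** A ** h) ** y) ** transpose h"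
    by (simp add: matrix_mul_assoc hh)
  also have "\<dots> = h ** (y ** (transpose h ** A ** h)) ** transpose h"
    using assms(2) by simp
  also have "\<dots> = (h ** y ** transpose h) ** A"
    by (simp add: matrix_mul_assoc hh flip: matrix_mul_assoc)
  finally show ?thesis .
qed

section \<open>The group $W(D_4)$\<close>

lemma diag_perm_entry: "(diag_mat e ** perm_mat p) $ i $ j = (if i = p j then e i else 0)"
proof -
  have "diag_mat e $ i $ k * perm_mat p $ k $ j = (if k = i then (if i = p j then e i else 0) else 0)" for k
    by (auto simp: diag_mat_def perm_mat_def)
  then show ?thesis
    by (simp add: matrix_matrix_mult_def)
qed

lemma WD4_iff:
  "x \<in> WD4 \<longleftrightarrow> (\<exists>e p. (\<forall>i. e i = 1 \<or> e i = -1) \<and> (\<Prod>i\<in>UNIV. e i) = 1 \<and> p permutes UNIV \<and>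
     (\<forall>i j. x $ i $ j = (if i = p j then e i else 0)))"
proof -
  have "x = diag_mat e ** perm_mat p \<longleftrightarrow> (\<forall>i j. x $ i $ j = (if i = p j then e i else 0))" for e p
    by (simp add: vec_eq_iff diag_perm_entry)
  then show ?thesis
    unfolding WD4_def by blast
qed

lemma WD4_intro:
  assumes "\<forall>i. e i = 1 \<or> e i = -1" "(\<Prod>i\<in>UNIV. e i) = 1" "p permutes UNIV"
    "\<And>i j. x $ i $ j = (if i = p j then e i else 0)"
  shows "x \<in> WD4"
  unfolding WD4_iff using assms by blast

lemma WD4_elim:
  assumes "x \<in> WD4"
  obtains e p where "\<forall>i. e i = 1 \<or> e i = -1" "(\<Prod>i\<in>UNIV. e i) = 1" "p permutes UNIV"
    "\<And>i j. x $ i $ j = (if i = p j then e i else 0)"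
  using assms unfolding WD4_iff by blast

lemma WD4_orthogonal:
  assumes "x \<in> WD4"
  shows "orthogonal_matrix x"
proof -
  obtain e p where e: "\<forall>i. e i = 1 \<or> e i = -1" and p: "p permutes UNIV"
    and x: "\<And>i j. x $ i $ j = (if i = p j then e i else 0)"
    using assms by (rule WD4_elim) blast
  have ee: "e k * e k = 1" for k
    using e[rule_format, of k] by auto
  have "transpose x $ i $ k * x $ k $ j = (if k = p i then (if i = j then 1 else 0) else 0)" for i j k
    using ee permutes_inj[OF p] by (auto simp: transpose_def x inj_eq)
  then show ?thesis
    by (simp add: orthogonal_matrix vec_eq_iff mat_def matrix_matrix_mult_def)
qed

lemma WD4_transpose:
  assumes "x \<in> WD4"
  shows "transpose x \<in> WD4"
proof -
  obtain e p where e: "\<forall>i. e i = 1 \<or> e i = -1" and pe: "(\<Prod>i\<in>UNIV. e i) = 1" and p: "p permutes UNIV"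
    and x: "\<And>i j. x $ i $ j = (if i = p j then e i else 0)"
    using assms by (rule WD4_elim) blast
  show ?thesis
  proof (rule WD4_intro)
    show "\<forall>i. (e \<circ> p) i = 1 \<or> (e \<circ> p) i = -1"
      using e by simp
    show "(\<Prod>i\<in>UNIV. (e \<circ> p) i) = 1"
      using pe prod.permute[OF p, of e] by simp
    show "transpose x $ i $ j = (if i = Hilbert_Choice.inv p j then (e \<circ> p) i else 0)" for i j
      using permutes_inverses[OF p] by (auto simp: transpose_def x)
  qed (rule permutes_inv[OF p])
qed

lemma WD4_mult:
  assumes "x \<in> WD4" and "y \<in> WD4"
  shows "x ** y \<in> WD4"
proof -
  obtain e p where e: "\<forall>i. e i = 1 \<or> e i = -1" and pe: "(\<Prod>i\<in>UNIV. e i) = 1" and p: "p permutes UNIV"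
    and x: "\<And>i j. x $ i $ j = (if i = p j then e i else 0)"
    using assms(1) by (rule WD4_elim) blast
  obtain f q where f: "\<forall>i. f i = 1 \<or> f i = -1" and qf: "(\<Prod>i\<in>UNIV. f i) = 1" and q: "q permutes UNIV"
    and y: "\<And>i j. y $ i $ j = (if i = q j then f i else 0)"
    using assms(2) by (rule WD4_elim) blast
  define d where "d i = e i * f (Hilbert_Choice.inv p i)" for i
  have "x $ i $ k * y $ k $ j = (if k = q j then (if i = p (q j) then e i * f (q j) else 0) else 0)" for i j k
    by (auto simp: x y)
  then have "(x ** y) $ i $ j = (if i = (p \<circ> q) j then d i else 0)" for i j
    using permutes_inverses[OF p] by (auto simp: matrix_matrix_mult_def d_def)
  moreover have "\<forall>i. d i = 1 \<or> d i = -1"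
  proof
    fix i show "d i = 1 \<or> d i = -1"
      using e[rule_format, of i] f[rule_format, of "Hilbert_Choice.inv p i"] by (auto simp: d_def)
  qed
  moreover have "(\<Prod>i\<in>UNIV. d i) = 1"
    using pe qf prod.permute[OF permutes_inv[OF p], of f] by (simp add: d_def prod.distrib comp_def)
  ultimately show ?thesis
    using permutes_compose[OF q p] by (blast intro: WD4_intro)
qed

lemma WD4_one: "mat 1 \<in> WD4"
  unfolding WD4_iff by (auto simp: mat_def intro!: exI[of _ "\<lambda>_. 1"] exI[of _ id] permutes_id)

lemma group_WD4_group: "group WD4_group"
proof (rule groupI)
  fix x assume "x \<in> carrier WD4_group"
  then show "\<exists>y\<in>carrier WD4_group. y \<otimes>\<^bsub>WD4_group\<^esub> x = \<one>\<^bsub>WD4_group\<^esub>"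
    using WD4_transpose WD4_orthogonal by (auto simp: WD4_group_def orthogonal_matrix)
qed (auto simp: WD4_group_def WD4_mult WD4_one matrix_mul_assoc)

lemma WD4_group_inv: "x \<in> WD4 \<Longrightarrow> inv\<^bsub>WD4_group\<^esub> x = transpose x"
  by (rule group.inv_equality[OF group_WD4_group])
    (auto simp: WD4_group_def WD4_transpose WD4_orthogonal[unfolded orthogonal_matrix])

lemma vector_4_nth [simp]:
  "(vector [a, b, c, d] :: 'a::zero^4) $ 1 = a"
  "(vector [a, b, c, d] :: 'a^4) $ 2 = b"
  "(vector [a, b, c, d] :: 'a^4) $ 3 = c"
  "(vector [a, b, c, d] :: 'a^4) $ 4 = d"
  unfolding vector_def by simp_all

lemma orthogonal_mu_mat: "orthogonal_matrix mu_mat"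
  unfolding orthogonal_matrix mu_mat_def
  by (simp add: vec_eq_iff forall_4 matrix_matrix_mult_def sum_4 transpose_def mat_def)

lemma orthogonal_rho_mat: "orthogonal_matrix rho_mat"
  unfolding orthogonal_matrix rho_mat_def
  by (simp add: vec_eq_iff forall_4 matrix_matrix_mult_def sum_4 transpose_def mat_def)

lemma mu_twisted_fixed_iff_commute:
  assumes "orthogonal_matrix g"
  shows "g ** mu_aut y ** transpose g = y \<longleftrightarrow> (g ** mu_mat) ** y = y ** (g ** mu_mat)"
proof -
  have "g ** mu_aut y ** transpose g = conj_by (g ** mu_mat) y"
    using orthogonal_mu_mat assms
    by (simp add: mu_aut_def conj_by_orthogonal orthogonal_matrix_mul matrix_transpose_mul matrix_mul_assoc)
  then show ?thesis
    using orthogonal_mu_mat assms by (simp add: conj_by_orthogonal_fixed_iff orthogonal_matrix_mul)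
qed

section \<open>Integer $4 \times 4$ matrices\<close>

text \<open>Index \<open>i :: 4\<close> is list position \<open>index4 i\<close>, in the order \<open>1, 2, 3, 4\<close> in which \<open>vector\<close> lists the rows of \<open>mu_mat\<close>.\<close>
definition index4 :: "4 \<Rightarrow> nat" where
  "index4 i = (if i = 1 then 0 else if i = 2 then 1 else if i = 3 then 2 else 3)"

definition index4_inv :: "nat \<Rightarrow> 4" where
  "index4_inv k = (if k = 0 then 1 else if k = 1 then 2 else if k = 2 then 3 else 4)"

lemma index4_simps [simp]: "index4 1 = 0" "index4 2 = 1" "index4 3 = 2" "index4 4 = 3"
  by (simp_all add: index4_def)

lemma index4_less [simp]: "index4 i < 4"
  by (simp add: index4_def)

lemma index4_inv_index4 [simp]: "index4_inv (index4 i) = i"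
  using exhaust_4[of i] by (auto simp: index4_inv_def)

lemma index4_index4_inv [simp]: "k < 4 \<Longrightarrow> index4 (index4_inv k) = k"
  by (auto simp: index4_inv_def index4_def)

lemma eq_index4_inv_iff: "k < 4 \<Longrightarrow> i = index4_inv k \<longleftrightarrow> index4 i = k"
  by auto

lemma index4_eq_iff [simp]: "index4 i = index4 j \<longleftrightarrow> i = j"
  by (metis index4_inv_index4)

lemma upt_4: "[0..<4] = [0, 1, 2, 3 :: nat]"
  by (simp add: upt_rec)

definition tabulate4 :: "(nat \<Rightarrow> nat \<Rightarrow> int) \<Rightarrow> int list list" where
  "tabulate4 f = map (\<lambda>i. map (f i) [0..<4]) [0..<4]"

lemma tabulate4_nth [simp]: "i < 4 \<Longrightarrow> j < 4 \<Longrightarrow> tabulate4 f ! i ! j = f i j"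
  by (simp add: tabulate4_def)

definition of_int_mat :: "int list list \<Rightarrow> real^4^4" where
  "of_int_mat L = (\<chi> i j. of_int (L ! index4 i ! index4 j))"

lemma of_int_mat_tabulate4: "of_int_mat (tabulate4 f) = (\<chi> i j. of_int (f (index4 i) (index4 j)))"
  by (simp add: of_int_mat_def)

definition int_mat_mult :: "int list list \<Rightarrow> int list list \<Rightarrow> int list list" where
  "int_mat_mult A B = tabulate4 (\<lambda>i j. \<Sum>k\<leftarrow>[0..<4]. A ! i ! k * B ! k ! j)"

definition int_mat_transpose :: "int list list \<Rightarrow> int list list" where
  "int_mat_transpose A = tabulate4 (\<lambda>i j. A ! j ! i)"

definition int_mat_add :: "int list list \<Rightarrow> int list list \<Rightarrow> int list list" where
  "int_mat_add A B = tabulate4 (\<lambda>i j. A ! i ! j + B ! i ! j)"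

definition int_mat_scale :: "int \<Rightarrow> int list list \<Rightarrow> int list list" where
  "int_mat_scale c A = tabulate4 (\<lambda>i j. c * A ! i ! j)"

primrec int_mat_poly :: "int list \<Rightarrow> int list list \<Rightarrow> int list list" where
  "int_mat_poly [] M = tabulate4 (\<lambda>_ _. 0)"
| "int_mat_poly (c # cs) M =
     int_mat_add (tabulate4 (\<lambda>i j. if i = j then c else 0)) (int_mat_mult M (int_mat_poly cs M))"

lemma of_int_mat_mult: "of_int_mat (int_mat_mult A B) = of_int_mat A ** of_int_mat B"
  by (simp add: int_mat_mult_def of_int_mat_tabulate4 vec_eq_iff matrix_matrix_mult_def sum_4 of_int_mat_def upt_4)

lemma of_int_mat_transpose: "of_int_mat (int_mat_transpose A) = transpose (of_int_mat A)"
  by (simp add: int_mat_transpose_def of_int_mat_tabulate4 vec_eq_iff transpose_def of_int_mat_def)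

lemma of_int_mat_scale: "of_int_mat (int_mat_scale c A) = of_int c *\<^sub>R of_int_mat A"
  by (simp add: int_mat_scale_def of_int_mat_tabulate4 vec_eq_iff of_int_mat_def)

lemma of_int_mat_poly: "of_int_mat (int_mat_poly cs M) = matrix_poly (map of_int cs) (of_int_mat M)"
proof (induction cs)
  case (Cons c cs)
  have "of_int_mat (tabulate4 (\<lambda>i j. if i = j then c else 0)) = of_int c *\<^sub>R mat 1"
    by (simp add: of_int_mat_tabulate4 vec_eq_iff mat_def)
  then show ?case
    by (simp add: int_mat_add_def of_int_mat_tabulate4 Cons.IH[symmetric] of_int_mat_mult[symmetric])
      (simp add: vec_eq_iff of_int_mat_def)
qed (simp add: of_int_mat_tabulate4 vec_eq_iff)

definition sign_list :: "int list \<Rightarrow> bool" where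
  "sign_list el \<longleftrightarrow> length el = 4 \<and> set el \<subseteq> {1, -1} \<and> prod_list el = 1"

definition perm_list :: "nat list \<Rightarrow> bool" where
  "perm_list pl \<longleftrightarrow> length pl = 4 \<and> set pl \<subseteq> {0..<4} \<and> distinct pl"

definition signed_perm :: "int list \<Rightarrow> nat list \<Rightarrow> int list list" where
  "signed_perm el pl = tabulate4 (\<lambda>i j. if i = pl ! j then el ! i else 0)"

lemma list_4: "length xs = 4 \<Longrightarrow> xs = [xs ! 0, xs ! 1, xs ! 2, xs ! 3]"
  by (simp add: numeral_eq_Suc length_Suc_conv) auto

lemma prod_UNIV_4: "prod f (UNIV :: 4 set) = f 1 * f 2 * f 3 * f 4"
  unfolding UNIV_4 by (simp add: ac_simps)

lemma prod_index4:
  assumes "length el = 4"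
  shows "(\<Prod>i\<in>UNIV. real_of_int (el ! index4 i)) = real_of_int (prod_list el)"
  by (subst list_4[OF assms]) (simp add: prod_UNIV_4)

lemma signed_perm_in_WD4:
  assumes "sign_list el" and "perm_list pl"
  shows "of_int_mat (signed_perm el pl) \<in> WD4"
proof (rule WD4_intro)
  define p where "p i = index4_inv (pl ! index4 i)" for i
  have pl: "length pl = 4" "distinct pl" "set pl \<subseteq> {0..<4}"
    using assms(2) by (auto simp: perm_list_def)
  have pl_less: "pl ! k < 4" if "k < 4" for k
  proof -
    have "pl ! k \<in> set pl"
      using pl(1) that by simp
    then show ?thesis
      using pl(3) by auto
  qed
  have "inj p"
  proof (rule injI)
    fix i j assume "p i = p j"
    then have "index4 (index4_inv (pl ! index4 i)) = index4 (index4_inv (pl ! index4 j))"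
      by (simp add: p_def)
    then have "pl ! index4 i = pl ! index4 j"
      using pl_less by simp
    then show "i = j"
      using pl(1,2) by (simp add: nth_eq_iff_index_eq)
  qed
  then show "p permutes UNIV"
    by (rule inj_imp_permutes) auto
  have el: "length el = 4" "set el \<subseteq> {1, -1}" "prod_list el = 1"
    using assms(1) by (auto simp: sign_list_def)
  have "real_of_int (el ! index4 i) \<in> {1, -1}" for i
  proof -
    have "el ! index4 i \<in> set el"
      using el(1) by simp
    then have "el ! index4 i \<in> {1, -1}"
      using el(2) by blast
    then show ?thesis
      by auto
  qed
  then show "\<forall>i. real_of_int (el ! index4 i) = 1 \<or> real_of_int (el ! index4 i) = -1"
    by blast
  show "(\<Prod>i\<in>UNIV. real_of_int (el ! index4 i)) = 1"
    using el(3) by (simp add: prod_index4 el(1))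
  show "of_int_mat (signed_perm el pl) $ i $ j = (if i = p j then real_of_int (el ! index4 i) else 0)" for i j
    using pl_less[of "index4 j"] by (simp add: signed_perm_def of_int_mat_tabulate4 p_def eq_index4_inv_iff)
qed

definition WD4_list :: "int list list list" where
  "WD4_list = [signed_perm el pl. el \<leftarrow> filter sign_list (List.n_lists 4 [1, -1]),
                                pl \<leftarrow> filter perm_list (List.n_lists 4 [0..<4])]"

lemma WD4_list_complete:
  assumes "x \<in> WD4"
  shows "\<exists>L \<in> set WD4_list. x = of_int_mat L"
proof -
  obtain e p where e: "\<forall>i. e i = 1 \<or> e i = -1" and pe: "(\<Prod>i\<in>UNIV. e i) = 1"
    and p: "p permutes UNIV" and x: "\<And>i j. x $ i $ j = (if i = p j then e i else 0)"
    using assms by (rule WD4_elim) blast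
  define el :: "int list" where "el = map (\<lambda>k. if e (index4_inv k) = 1 then 1 else -1) [0..<4]"
  define pl where "pl = map (\<lambda>k. index4 (p (index4_inv k))) [0..<4]"
  have el_index4: "real_of_int (el ! index4 i) = e i" for i
    using e[rule_format, of i] by (auto simp: el_def)
  have "sign_list el"
  proof -
    have "length el = 4"
      by (simp add: el_def)
    then have "real_of_int (prod_list el) = (\<Prod>i\<in>UNIV. e i)"
      by (simp add: el_index4 flip: prod_index4)
    then have "prod_list el = 1"
      using pe by simp
    then show ?thesis
      by (auto simp: sign_list_def el_def)
  qed
  moreover have "perm_list pl"
  proof -
    have "inj_on (\<lambda>k. index4 (p (index4_inv k))) {0..<4}"
    proof (rule inj_onI)
      fix k k' assume k: "k \<in> {0..<4}" "k' \<in> {0..<4}" and "index4 (p (index4_inv k)) = index4 (p (index4_inv k'))"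
      then have "index4_inv k = index4_inv k'"
        using permutes_inj[OF p] by (simp add: inj_eq)
      then show "k = k'"
        using k by (metis atLeastLessThan_iff index4_index4_inv)
    qed
    then show ?thesis
      by (simp add: perm_list_def pl_def distinct_map) auto
  qed
  moreover have "x = of_int_mat (signed_perm el pl)"
    by (auto simp: vec_eq_iff x signed_perm_def of_int_mat_tabulate4 pl_def el_index4)
  ultimately show ?thesis
    by (auto simp: WD4_list_def set_n_lists sign_list_def perm_list_def)
qed

section \<open>Polynomial certificates\<close>

definition mu_int_mat :: "int list list" where
  "mu_int_mat = [[1, 1, 1, -1], [1, 1, -1, 1], [1, -1, 1, 1], [1, -1, -1, -1]]"

definition rho_int_mat :: "int list list" where
  "rho_int_mat = [[-1, 1, 1, 1], [-1, -1, 1, -1], [-1, -1, -1, 1], [-1, 1, -1, -1]]"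

lemma of_int_mat_mu_int_mat: "of_int_mat mu_int_mat = 2 *\<^sub>R mu_mat"
  by (simp add: of_int_mat_def mu_int_mat_def mu_mat_def vec_eq_iff forall_4)

lemma of_int_mat_rho_int_mat: "of_int_mat rho_int_mat = 2 *\<^sub>R rho_mat"
  by (simp add: of_int_mat_def rho_int_mat_def rho_mat_def vec_eq_iff forall_4)

text \<open>
  The entries of \<open>\<mu>\<close> and \<open>\<rho>\<close> are \<open>\<plusminus>1/2\<close>, so the certificate works with \<open>2\<mu>\<close>, \<open>2\<rho>\<close>
  and \<open>N = 2g\<mu>\<close>: for \<open>h\<close> the signed permutation \<open>(eh, ph)\<close> and \<open>A\<close> equal to \<open>\<mu>\<close> or \<open>\<rho>\<close>
  according to \<open>fl\<close>, it states \<open>8 h\<^sup>T A h = \<Sum>\<^sub>k cs\<^sub>k N\<^sup>k\<close>.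
\<close>
definition poly_certificate :: "int list list \<Rightarrow> int list \<times> nat list \<times> bool \<times> int list \<Rightarrow> bool" where
  "poly_certificate G = (\<lambda>(eh, ph, fl, cs). sign_list eh \<and> perm_list ph \<and>
     (let H = signed_perm eh ph; A = (if fl then mu_int_mat else rho_int_mat) in
      int_mat_scale 4 (int_mat_mult (int_mat_transpose H) (int_mat_mult A H))
        = int_mat_poly cs (int_mat_mult G mu_int_mat)))"

definition certificates :: "(int list \<times> nat list \<times> bool \<times> int list) list" where
  "certificates =
  [([1,-1,-1,1], [3,2,1,0], True, [0,-4,0,0]),
   ([1,-1,-1,1], [3,2,1,0], True, [8,-4,0,1]),
   ([1,-1,-1,1], [3,2,1,0], True, [8,-4,0,1]),
   ([1,1,1,1], [0,3,2,1], False, [0,-4,0,0]),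
   ([1,1,1,1], [0,2,3,1], False, [0,-4,0,0]),
   ([1,-1,-1,1], [3,2,1,0], True, [8,-4,0,1]),
   ([1,1,1,1], [0,3,2,1], True, [8,4,0,-1]),
   ([1,1,1,1], [0,3,2,1], True, [0,4,0,0]),
   ([1,1,1,1], [2,3,0,1], False, [-8,0,2,0]),
   ([1,1,1,1], [2,1,0,3], True, [8,-4,0,1]),
   ([1,1,1,1], [2,1,3,0], True, [8,-4,0,1]),
   ([1,1,1,1], [2,3,1,0], False, [-8,0,2,0]),
   ([1,1,1,1], [2,0,3,1], False, [-8,0,2,0]),
   ([1,1,1,1], [2,3,1,0], True, [8,-4,0,1]),
   ([1,1,1,1], [0,2,3,1], True, [8,4,0,-1]),
   ([1,1,1,1], [3,2,1,0], False, [-8,0,2,0]),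
   ([1,1,1,1], [0,2,3,1], True, [0,4,0,0]),
   ([1,1,1,1], [2,0,1,3], True, [8,-4,0,1]),
   ([1,1,1,1], [2,3,0,1], True, [8,-4,0,1]),
   ([1,1,1,1], [3,0,2,1], False, [-8,0,2,0]),
   ([1,1,1,1], [3,2,0,1], False, [-8,0,2,0]),
   ([1,1,1,1], [0,2,1,3], True, [8,4,0,-1]),
   ([1,1,1,1], [2,0,3,1], True, [8,-4,0,1]),
   ([1,1,1,1], [0,2,1,3], True, [0,4,0,0]),
   ([1,-1,-1,1], [2,3,1,0], True, [0,-4,0,0]),
   ([1,-1,-1,1], [2,3,1,0], True, [8,-4,0,1]),
   ([1,1,1,1], [2,3,0,1], True, [8,4,0,-1]),
   ([1,1,1,1], [3,2,0,1], False, [-8,0,2,0]),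
   ([1,1,1,1], [3,2,1,0], False, [-8,0,2,0]),
   ([1,1,1,1], [2,3,1,0], True, [8,4,0,-1]),
   ([1,1,1,1], [3,0,2,1], True, [8,4,0,-1]),
   ([1,1,1,1], [3,0,2,1], True, [0,4,0,0]),
   ([1,1,1,1], [3,0,2,1], False, [-8,0,2,0]),
   ([1,1,1,1], [2,0,3,1], True, [8,-4,0,1]),
   ([1,1,1,1], [2,0,1,3], True, [8,-4,0,1]),
   ([1,1,1,1], [2,0,3,1], False, [-8,0,2,0]),
   ([1,1,1,1], [2,3,1,0], False, [0,4,0,0]),
   ([1,1,1,1], [3,0,2,1], True, [8,4,0,-1]),
   ([1,-1,-1,1], [2,1,0,3], True, [8,4,0,-1]),
   ([1,1,1,1], [0,2,3,1], False, [-8,0,2,0]),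
   ([1,1,1,1], [2,0,1,3], True, [0,-4,0,0]),
   ([1,1,1,1], [0,2,3,1], True, [8,4,0,-1]),
   ([1,1,1,1], [3,0,2,1], True, [8,4,0,-1]),
   ([1,1,1,1], [2,3,0,1], False, [0,4,0,0]),
   ([1,1,1,1], [0,3,2,1], False, [-8,0,2,0]),
   ([1,-1,-1,1], [2,1,3,0], True, [8,4,0,-1]),
   ([1,1,1,1], [0,2,1,3], True, [8,4,0,-1]),
   ([1,1,1,1], [2,0,3,1], True, [0,-4,0,0]),
   ([1,-1,-1,1], [2,1,3,0], True, [0,-4,0,0]),
   ([1,1,1,1], [2,1,3,0], True, [8,4,0,-1]),
   ([1,1,1,1], [2,0,3,1], True, [8,4,0,-1]),
   ([1,1,1,1], [2,3,1,0], False, [-8,0,2,0]),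
   ([1,1,1,1], [3,0,2,1], False, [-8,0,2,0]),
   ([1,-1,-1,1], [2,1,3,0], True, [8,-4,0,1]),
   ([1,-1,-1,1], [2,1,0,3], True, [8,4,0,-1]),
   ([1,1,1,1], [2,1,0,3], True, [0,-4,0,0]),
   ([1,1,1,1], [3,2,1,0], False, [0,4,0,0]),
   ([1,1,1,1], [0,3,2,1], True, [8,4,0,-1]),
   ([1,1,1,1], [3,2,0,1], True, [8,4,0,-1]),
   ([1,1,1,1], [0,3,2,1], False, [-8,0,2,0]),
   ([1,1,1,1], [3,2,0,1], False, [-8,0,2,0]),
   ([1,1,1,1], [2,1,0,3], True, [8,-4,0,1]),
   ([1,1,1,1], [3,2,0,1], True, [8,4,0,-1]),
   ([1,1,1,1], [2,3,0,1], False, [-8,0,2,0]),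
   ([1,1,1,1], [3,2,0,1], True, [0,4,0,0]),
   ([1,1,1,1], [2,3,0,1], True, [8,-4,0,1]),
   ([1,1,1,1], [0,2,1,3], True, [8,4,0,-1]),
   ([1,1,1,1], [0,2,3,1], False, [-8,0,2,0]),
   ([1,1,1,1], [2,0,3,1], False, [0,4,0,0]),
   ([1,-1,-1,1], [2,3,1,0], True, [8,4,0,-1]),
   ([1,1,1,1], [3,2,0,1], True, [8,4,0,-1]),
   ([1,1,1,1], [2,3,0,1], True, [0,-4,0,0]),
   ([1,-1,-1,1], [2,1,0,3], True, [0,4,0,0]),
   ([1,1,1,1], [2,1,0,3], True, [8,-4,0,1]),
   ([1,-1,-1,1], [2,1,0,3], True, [8,4,0,-1]),
   ([1,1,1,1], [2,0,3,1], False, [-8,0,2,0]),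
   ([1,1,1,1], [2,3,0,1], False, [-8,0,2,0]),
   ([1,1,1,1], [2,0,1,3], True, [8,-4,0,1]),
   ([1,-1,-1,1], [2,1,3,0], True, [8,-4,0,1]),
   ([1,1,1,1], [2,1,3,0], True, [0,4,0,0]),
   ([1,1,1,1], [0,2,3,1], False, [-8,0,2,0]),
   ([1,1,1,1], [3,2,1,0], True, [8,-4,0,1]),
   ([1,1,1,1], [0,3,2,1], True, [8,-4,0,1]),
   ([1,1,1,1], [3,2,0,1], False, [0,-4,0,0]),
   ([1,1,1,1], [0,3,2,1], False, [-8,0,2,0]),
   ([1,1,1,1], [0,2,3,1], True, [8,-4,0,1]),
   ([1,-1,-1,1], [2,3,1,0], True, [8,-4,0,1]),
   ([1,1,1,1], [3,0,2,1], False, [0,-4,0,0]),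
   ([1,1,1,1], [2,3,1,0], True, [0,4,0,0]),
   ([1,1,1,1], [3,2,1,0], True, [8,-4,0,1]),
   ([1,1,1,1], [2,1,3,0], True, [8,4,0,-1]),
   ([1,1,1,1], [3,2,1,0], False, [-8,0,2,0]),
   ([1,1,1,1], [2,3,1,0], False, [-8,0,2,0]),
   ([1,1,1,1], [3,2,1,0], True, [8,-4,0,1]),
   ([1,1,1,1], [2,3,1,0], True, [8,4,0,-1]),
   ([1,1,1,1], [3,2,1,0], True, [0,-4,0,0]),
   ([1,-1,-1,1], [2,1,0,3], True, [0,-4,0,0]),
   ([1,1,1,1], [2,1,0,3], True, [8,4,0,-1]),
   ([1,-1,-1,1], [2,1,0,3], True, [8,-4,0,1]),
   ([1,1,1,1], [2,0,3,1], False, [-8,0,2,0]),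
   ([1,1,1,1], [2,3,0,1], False, [-8,0,2,0]),
   ([1,1,1,1], [2,0,1,3], True, [8,4,0,-1]),
   ([1,-1,-1,1], [2,1,3,0], True, [8,4,0,-1]),
   ([1,1,1,1], [2,1,3,0], True, [0,-4,0,0]),
   ([1,1,1,1], [0,2,3,1], False, [-8,0,2,0]),
   ([1,1,1,1], [3,2,1,0], True, [8,4,0,-1]),
   ([1,1,1,1], [0,3,2,1], True, [8,4,0,-1]),
   ([1,1,1,1], [3,2,0,1], False, [0,4,0,0]),
   ([1,1,1,1], [0,3,2,1], False, [-8,0,2,0]),
   ([1,1,1,1], [0,2,3,1], True, [8,4,0,-1]),
   ([1,-1,-1,1], [2,3,1,0], True, [8,4,0,-1]),
   ([1,1,1,1], [3,0,2,1], False, [0,4,0,0]),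
   ([1,1,1,1], [2,3,1,0], True, [0,-4,0,0]),
   ([1,1,1,1], [3,2,1,0], True, [8,4,0,-1]),
   ([1,1,1,1], [2,1,3,0], True, [8,-4,0,1]),
   ([1,1,1,1], [3,2,1,0], False, [-8,0,2,0]),
   ([1,1,1,1], [2,3,1,0], False, [-8,0,2,0]),
   ([1,1,1,1], [3,2,1,0], True, [8,4,0,-1]),
   ([1,1,1,1], [2,3,1,0], True, [8,-4,0,1]),
   ([1,1,1,1], [3,2,1,0], True, [0,4,0,0]),
   ([1,-1,-1,1], [2,1,3,0], True, [0,4,0,0]),
   ([1,1,1,1], [2,1,3,0], True, [8,-4,0,1]),
   ([1,1,1,1], [2,0,3,1], True, [8,-4,0,1]),
   ([1,1,1,1], [2,3,1,0], False, [-8,0,2,0]),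
   ([1,1,1,1], [3,0,2,1], False, [-8,0,2,0]),
   ([1,-1,-1,1], [2,1,3,0], True, [8,4,0,-1]),
   ([1,-1,-1,1], [2,1,0,3], True, [8,-4,0,1]),
   ([1,1,1,1], [2,1,0,3], True, [0,4,0,0]),
   ([1,1,1,1], [3,2,1,0], False, [0,-4,0,0]),
   ([1,1,1,1], [0,3,2,1], True, [8,-4,0,1]),
   ([1,1,1,1], [3,2,0,1], True, [8,-4,0,1]),
   ([1,1,1,1], [0,3,2,1], False, [-8,0,2,0]),
   ([1,1,1,1], [3,2,0,1], False, [-8,0,2,0]),
   ([1,1,1,1], [2,1,0,3], True, [8,4,0,-1]),
   ([1,1,1,1], [3,2,0,1], True, [8,-4,0,1]),
   ([1,1,1,1], [2,3,0,1], False, [-8,0,2,0]),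
   ([1,1,1,1], [3,2,0,1], True, [0,-4,0,0]),
   ([1,1,1,1], [2,3,0,1], True, [8,4,0,-1]),
   ([1,1,1,1], [0,2,1,3], True, [8,-4,0,1]),
   ([1,1,1,1], [0,2,3,1], False, [-8,0,2,0]),
   ([1,1,1,1], [2,0,3,1], False, [0,-4,0,0]),
   ([1,-1,-1,1], [2,3,1,0], True, [8,-4,0,1]),
   ([1,1,1,1], [3,2,0,1], True, [8,-4,0,1]),
   ([1,1,1,1], [2,3,0,1], True, [0,4,0,0]),
   ([1,-1,-1,1], [2,3,1,0], True, [0,4,0,0]),
   ([1,-1,-1,1], [2,3,1,0], True, [8,4,0,-1]),
   ([1,1,1,1], [2,3,0,1], True, [8,-4,0,1]),
   ([1,1,1,1], [3,2,0,1], False, [-8,0,2,0]),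
   ([1,1,1,1], [3,2,1,0], False, [-8,0,2,0]),
   ([1,1,1,1], [2,3,1,0], True, [8,-4,0,1]),
   ([1,1,1,1], [3,0,2,1], True, [8,-4,0,1]),
   ([1,1,1,1], [3,0,2,1], True, [0,-4,0,0]),
   ([1,1,1,1], [3,0,2,1], False, [-8,0,2,0]),
   ([1,1,1,1], [2,0,3,1], True, [8,4,0,-1]),
   ([1,1,1,1], [2,0,1,3], True, [8,4,0,-1]),
   ([1,1,1,1], [2,0,3,1], False, [-8,0,2,0]),
   ([1,1,1,1], [2,3,1,0], False, [0,-4,0,0]),
   ([1,1,1,1], [3,0,2,1], True, [8,-4,0,1]),
   ([1,-1,-1,1], [2,1,0,3], True, [8,-4,0,1]),
   ([1,1,1,1], [0,2,3,1], False, [-8,0,2,0]),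
   ([1,1,1,1], [2,0,1,3], True, [0,4,0,0]),
   ([1,1,1,1], [0,2,3,1], True, [8,-4,0,1]),
   ([1,1,1,1], [3,0,2,1], True, [8,-4,0,1]),
   ([1,1,1,1], [2,3,0,1], False, [0,-4,0,0]),
   ([1,1,1,1], [0,3,2,1], False, [-8,0,2,0]),
   ([1,-1,-1,1], [2,1,3,0], True, [8,-4,0,1]),
   ([1,1,1,1], [0,2,1,3], True, [8,-4,0,1]),
   ([1,1,1,1], [2,0,3,1], True, [0,4,0,0]),
   ([1,-1,-1,1], [3,2,1,0], True, [0,4,0,0]),
   ([1,-1,-1,1], [3,2,1,0], True, [8,4,0,-1]),
   ([1,-1,-1,1], [3,2,1,0], True, [8,4,0,-1]),
   ([1,1,1,1], [0,3,2,1], False, [0,4,0,0]),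
   ([1,1,1,1], [0,2,3,1], False, [0,4,0,0]),
   ([1,-1,-1,1], [3,2,1,0], True, [8,4,0,-1]),
   ([1,1,1,1], [0,3,2,1], True, [8,-4,0,1]),
   ([1,1,1,1], [0,3,2,1], True, [0,-4,0,0]),
   ([1,1,1,1], [2,3,0,1], False, [-8,0,2,0]),
   ([1,1,1,1], [2,1,0,3], True, [8,4,0,-1]),
   ([1,1,1,1], [2,1,3,0], True, [8,4,0,-1]),
   ([1,1,1,1], [2,3,1,0], False, [-8,0,2,0]),
   ([1,1,1,1], [2,0,3,1], False, [-8,0,2,0]),
   ([1,1,1,1], [2,3,1,0], True, [8,4,0,-1]),
   ([1,1,1,1], [0,2,3,1], True, [8,-4,0,1]),
   ([1,1,1,1], [3,2,1,0], False, [-8,0,2,0]),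
   ([1,1,1,1], [0,2,3,1], True, [0,-4,0,0]),
   ([1,1,1,1], [2,0,1,3], True, [8,4,0,-1]),
   ([1,1,1,1], [2,3,0,1], True, [8,4,0,-1]),
   ([1,1,1,1], [3,0,2,1], False, [-8,0,2,0]),
   ([1,1,1,1], [3,2,0,1], False, [-8,0,2,0]),
   ([1,1,1,1], [0,2,1,3], True, [8,-4,0,1]),
   ([1,1,1,1], [2,0,3,1], True, [8,4,0,-1]),
   ([1,1,1,1], [0,2,1,3], True, [0,-4,0,0])]"

lemma certificates_valid: "list_all2 poly_certificate WD4_list certificates"
  by code_simp

lemma WD4_poly_certificate:
  assumes "g \<in> WD4"
  obtains h A cs where "h \<in> WD4" and "A \<in> {mu_mat, rho_mat}"
    and "matrix_poly cs (2 *\<^sub>R (g ** mu_mat)) = 8 *\<^sub>R (transpose h ** A ** h)"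
proof -
  obtain L where L: "L \<in> set WD4_list" and g: "g = of_int_mat L"
    using WD4_list_complete[OF assms] by blast
  obtain k where k: "k < length WD4_list" "WD4_list ! k = L"
    using L by (meson in_set_conv_nth)
  obtain eh ph fl cs where c: "certificates ! k = (eh, ph, fl, cs)"
    by (cases "certificates ! k") auto
  define H where "H = signed_perm eh ph"
  define B where "B = (if fl then mu_int_mat else rho_int_mat)"
  have "poly_certificate L (eh, ph, fl, cs)"
    using list_all2_nthD[OF certificates_valid k(1)] k(2) c by simp
  then have cert: "sign_list eh" "perm_list ph"
    "int_mat_scale 4 (int_mat_mult (int_mat_transpose H) (int_mat_mult B H)) = int_mat_poly cs (int_mat_mult L mu_int_mat)"
    by (simp_all add: poly_certificate_def Let_def H_def B_def)
  define h where "h = of_int_mat H"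
  define A where "A = (if fl then mu_mat else rho_mat)"
  have "of_int_mat B = 2 *\<^sub>R A"
    by (simp add: A_def B_def of_int_mat_mu_int_mat of_int_mat_rho_int_mat)
  then have "matrix_poly (map of_int cs) (2 *\<^sub>R (g ** mu_mat)) = 8 *\<^sub>R (transpose h ** A ** h)"
    using arg_cong[OF cert(3), of of_int_mat]
    by (simp add: of_int_mat_scale of_int_mat_mult of_int_mat_transpose of_int_mat_poly
        of_int_mat_mu_int_mat g h_def matrix_scalar_ac scalar_matrix_assoc[symmetric] matrix_mul_assoc)
  moreover have "h \<in> WD4"
    unfolding h_def H_def using cert(1,2) by (rule signed_perm_in_WD4)
  moreover have "A \<in> {mu_mat, rho_mat}"
    by (simp add: A_def)
  ultimately show ?thesis
    using that by blast
qed

lemma WD4_twisted_centralizer_conj_Fix: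
  assumes "g \<in> WD4"
  shows "\<exists>h \<in> WD4. \<exists>\<alpha> \<in> {mu_aut, rho_aut}.
           (\<lambda>y. h ** y ** transpose h) ` {y \<in> WD4. g ** mu_aut y ** transpose g = y} \<subseteq> Fix \<alpha>"
proof -
  obtain h A cs where h: "h \<in> WD4" and A: "A \<in> {mu_mat, rho_mat}"
    and poly: "matrix_poly cs (2 *\<^sub>R (g ** mu_mat)) = 8 *\<^sub>R (transpose h ** A ** h)"
    using WD4_poly_certificate[OF assms] .
  have A_orth: "orthogonal_matrix A"
    using A orthogonal_mu_mat orthogonal_rho_mat by auto
  have "h ** y ** transpose h \<in> Fix (conj_by A)"
    if y: "y \<in> WD4" "g ** mu_aut y ** transpose g = y" for y
  proof -
    have "y ** (2 *\<^sub>R (g ** mu_mat)) = (2 *\<^sub>R (g ** mu_mat)) ** y"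
      using y mu_twisted_fixed_iff_commute[OF WD4_orthogonal[OF assms]]
      by (simp add: matrix_scalar_ac scalar_matrix_assoc[symmetric])
    then have "y ** (8 *\<^sub>R (transpose h ** A ** h)) = (8 *\<^sub>R (transpose h ** A ** h)) ** y"
      unfolding poly[symmetric] by (rule matrix_poly_commute)
    then have "(transpose h ** A ** h) ** y = y ** (transpose h ** A ** h)"
      by (simp add: matrix_scalar_ac scalar_matrix_assoc[symmetric])
    then have "A ** (h ** y ** transpose h) = (h ** y ** transpose h) ** A"
      by (rule commute_conj_orthogonal[OF WD4_orthogonal[OF h]])
    then show ?thesis
      using h y(1) by (simp add: Fix_def conj_by_orthogonal_fixed_iff[OF A_orth] WD4_mult WD4_transpose)
  qed
  moreover have "conj_by A \<in> {mu_aut, rho_aut}"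
    using A by (auto simp: mu_aut_def rho_aut_def)
  ultimately show ?thesis
    using h by blast
qed

theorem theorem6p1:
  fixes \<Gamma> :: "('a, 'm) monoid_scheme" and T :: "'a topology"
    and \<xi> :: "('a \<Rightarrow> real^4^4) set"
  assumes "topological_group \<Gamma> T"
    and "\<xi> \<in> H1 \<Gamma> T WD4_group"
    and "H1_act \<Gamma> T WD4_group mu_aut \<xi> = \<xi>"
  shows "\<exists>\<alpha> \<in> {mu_aut, rho_aut}. \<xi> \<in> H1_incl_image \<Gamma> T WD4_group (Fix \<alpha>)"
proof (rule group.H1_fixed_class_in_incl_image[OF group_WD4_group _ assms(2,3)])
  show "topspace T \<subseteq> carrier \<Gamma>"
    using assms(1) by (simp add: topological_group_def)
qed (use WD4_twisted_centralizer_conj_Fix in \<open>auto simp: WD4_group_def WD4_group_inv[unfolded WD4_group_def]\<close>)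

end
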